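(* Let $x$ be an integer with $0\le x\le p-1$ and $w$ a positive integer. Let $N_x$ be the least period of $(T_n^i(x)\bmod p)_{i\ge0}$ and $l_x$ the multiplicative order modulo $p$ of $T'_{n^{N_x}}(x)$. If $T_{n^{N_xl_x}}(x)\equiv x\pmod{p^w}$, then $T'_{n^{N_xl_x}}(x)\equiv 1\pmod{p^w}$ holds if and only if $n^{2\,\mathrm{ord}(n^2)}\equiv 1\pmod{p^w}$, where $\mathrm{ord}(n^2)$ is the multiplicative order of $n^2$ modulo $p$.
   Context: $p$ is a prime with $p>3$ and $n>1$ is an integer with $\gcd(n,p)=\gcd(n,p^2-1)=1$. $T_d(x)\in\mathbb{Z}[x]$ is the Chebyshev polynomial of the first kind: $T_0=1$, $T_1=x$, $T_d=2xT_{d-1}-T_{d-2}$; $T'_d$ is its derivative. $T_n^i$ is the $i$-fold composition of $T_n$ ($T_n^0(x)=x$), equal to $T_{n^i}$. The least period of $(T_n^i(x)\bmod p)_{i\ge0}$ is the least positive $N$ with $T_n^N(x)\equiv x\pmod p$. *)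

theory Defs
  imports "HOL-Number_Theory.Number_Theory" "HOL-Computational_Algebra.Polynomial"
begin

fun cheb :: "nat \<Rightarrow> int poly" where
  "cheb 0 = 1"
| "cheb (Suc 0) = [:0, 1:]"
| "cheb (Suc (Suc d)) = smult 2 ([:0, 1:] * cheb (Suc d)) - cheb d"

definition chebT :: "nat \<Rightarrow> int \<Rightarrow> int" where
  "chebT d x = poly (cheb d) x"

definition chebT' :: "nat \<Rightarrow> int \<Rightarrow> int" where
  "chebT' d x = poly (pderiv (cheb d)) x"

text \<open>Least period of (T_n^i(x) mod p), using T_n^i = T_{n^i}.\<close>
definition cheb_period :: "nat \<Rightarrow> nat \<Rightarrow> int \<Rightarrow> nat" where
  "cheb_period p n x = (LEAST N. N > 0 \<and> [chebT (n ^ N) x = x] (mod int p))"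

end

theory Submission
  imports Defs
begin

text \<open>
  Put m = n^(N_x l_x). The numbers T_k(x) and U_(k-1)(x) are the coordinates of
  (x + sqrt(x^2 - 1))^k, so they satisfy Pell's equation T^2 - (x^2 - 1) U^2 = 1, and
  T'_k = k U_(k-1). The Frobenius modulo p makes x + sqrt(x^2 - 1) a unit of order dividing
  p - 1 or p + 1; since n is prime to p^2 - 1 this gives 0 < N_x < p, and the chain rule gives
  T'_m(x) = T'_(n^N_x)(x)^l_x = 1 modulo p.

  If x^2 is not 1 modulo p, Pell's equation and T_m(x) = x modulo p^w force U^2 = 1 modulo
  p^w, so m U = 1 is equivalent to m^2 = 1 modulo p^w. For x = 1 the derivative is m^2 itself,
  and x = p - 1 needs a finer expansion of U around 1. Finally m^2 = (n^(2 ord(n^2)))^r where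
  p does not divide r, because N_x and l_x are smaller than p, and raising a number that is 1
  modulo p to a power prime to p does not change whether it is 1 modulo p^w.
\<close>

section \<open>Chebyshev polynomials as a Pell pair\<close>

lemma chebT_0 [simp]: "chebT 0 y = 1"
  and chebT_1 [simp]: "chebT (Suc 0) y = y"
  and chebT_Suc_Suc [simp]: "chebT (Suc (Suc k)) y = 2 * y * chebT (Suc k) y - chebT k y"
  by (simp_all add: chebT_def)

text \<open>chebU k y is U_(k-1)(y), the Chebyshev polynomial of the second kind shifted by one, so
  that T'_k = k chebU k and chebT k y + chebU k y sqrt(y^2 - 1) = (y + sqrt(y^2 - 1))^k.\<close>

fun chebU :: "nat \<Rightarrow> int \<Rightarrow> int" where
  "chebU 0 y = 0"
| "chebU (Suc 0) y = 1"
| "chebU (Suc (Suc k)) y = 2 * y * chebU (Suc k) y - chebU k y"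

lemma chebT_chebU_Suc:
  "chebT (Suc k) y = y * chebT k y + (y\<^sup>2 - 1) * chebU k y \<and>
   chebU (Suc k) y = chebT k y + y * chebU k y"
proof (induction k rule: induct_nat_012)
  case (ge2 k)
  then have T: "chebT (Suc (Suc k)) y = y * chebT (Suc k) y + (y\<^sup>2 - 1) * chebU (Suc k) y"
    and U: "chebU (Suc (Suc k)) y = chebT (Suc k) y + y * chebU (Suc k) y"
    by blast+
  show ?case
    unfolding chebT_Suc_Suc[of "Suc k"] chebU.simps(3)[of "Suc k"] T U
    by (simp add: algebra_simps power2_eq_square)
qed (simp_all add: power2_eq_square)

lemma chebT_Suc: "chebT (Suc k) y = y * chebT k y + (y\<^sup>2 - 1) * chebU k y"
  and chebU_Suc: "chebU (Suc k) y = chebT k y + y * chebU k y"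
  using chebT_chebU_Suc by blast+

lemma chebT_chebU_pred:
  "chebT k y = y * chebT (Suc k) y - (y\<^sup>2 - 1) * chebU (Suc k) y \<and>
   chebU k y = y * chebU (Suc k) y - chebT (Suc k) y"
  unfolding chebT_Suc chebU_Suc by (simp add: algebra_simps power2_eq_square)

lemma chebT_chebU_pell: "chebT k y ^ 2 - (y\<^sup>2 - 1) * chebU k y ^ 2 = 1"
proof (induction k)
  case (Suc k)
  then show ?case
    unfolding chebT_Suc chebU_Suc by (simp add: algebra_simps power2_eq_square)
qed simp

lemma chebT_chebU_add:
  "chebT (a + b) y = chebT a y * chebT b y + (y\<^sup>2 - 1) * chebU a y * chebU b y \<and>
   chebU (a + b) y = chebT a y * chebU b y + chebU a y * chebT b y"
proof (induction b)
  case (Suc b)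
  have "chebT (a + Suc b) y = y * chebT (a + b) y + (y\<^sup>2 - 1) * chebU (a + b) y"
    "chebU (a + Suc b) y = chebT (a + b) y + y * chebU (a + b) y"
    by (simp_all add: chebT_Suc chebU_Suc)
  then show ?case
    unfolding Suc.IH[THEN conjunct1] Suc.IH[THEN conjunct2]
    by (simp add: chebT_Suc chebU_Suc algebra_simps)
qed simp

lemma chebT_add: "chebT (a + b) y = chebT a y * chebT b y + (y\<^sup>2 - 1) * chebU a y * chebU b y"
  and chebU_add: "chebU (a + b) y = chebT a y * chebU b y + chebU a y * chebT b y"
  using chebT_chebU_add by blast+

lemma chebT_add_double: "chebT (c + 2 * b) y = 2 * chebT b y * chebT (c + b) y - chebT c y"
proof -
  have "chebT (c + 2 * b) y = chebT (c + b) y * chebT b y + (y\<^sup>2 - 1) * chebU (c + b) y * chebU b y"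
    using chebT_add[of "c + b" b y] by (simp add: mult_2 add.assoc)
  also have "\<dots> = 2 * chebT b y * chebT (c + b) y - chebT c y
      - chebT c y * ((chebT b y)\<^sup>2 - (y\<^sup>2 - 1) * (chebU b y)\<^sup>2 - 1)"
    unfolding chebT_add chebU_add by (simp add: algebra_simps power2_eq_square)
  finally show ?thesis
    by (simp add: chebT_chebU_pell)
qed

lemma chebT_mult: "chebT (a * b) y = chebT a (chebT b y)"
proof (induction a rule: induct_nat_012)
  case (ge2 a)
  have "Suc (Suc a) * b = a * b + 2 * b" "a * b + b = Suc a * b"
    by simp_all
  then have "chebT (Suc (Suc a) * b) y = 2 * chebT b y * chebT (Suc a * b) y - chebT (a * b) y"
    by (simp only: chebT_add_double)
  then show ?case
    using ge2 by simp
qed simp_all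

lemma chebT'_eq_chebU: "chebT' k y = int k * chebU k y"
  unfolding chebT'_def
proof (induction k rule: cheb.induct)
  case (3 d)
  have "poly (pderiv (cheb (Suc (Suc d)))) y
     = 2 * chebT (Suc d) y + 2 * y * poly (pderiv (cheb (Suc d))) y - poly (pderiv (cheb d)) y"
    by (simp add: chebT_def pderiv_mult pderiv_diff pderiv_smult pderiv_pCons algebra_simps)
  also have "\<dots> = int (Suc (Suc d)) * chebU (Suc (Suc d)) y"
    using 3 chebT_Suc[of d y] chebU_Suc[of d y] chebU_Suc[of "Suc d" y] chebT_chebU_Suc[of d y]
    by (simp add: algebra_simps power2_eq_square)
  finally show ?case .
qed (simp_all add: pderiv_pCons)

lemma cheb_mult: "cheb (a * b) = pcompose (cheb a) (cheb b)"
  by (rule poly_ext) (simp add: poly_pcompose chebT_mult[unfolded chebT_def])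

lemma chebT'_mult: "chebT' (a * b) y = chebT' a (chebT b y) * chebT' b y"
  unfolding chebT'_def chebT_def cheb_mult pderiv_pcompose by (simp add: poly_pcompose)

lemma chebU_mult: "chebU (a * b) y = chebU a (chebT b y) * chebU b y"
proof (cases "a = 0 \<or> b = 0")
  case False
  have "int (a * b) * chebU (a * b) y = int (a * b) * (chebU a (chebT b y) * chebU b y)"
    using chebT'_mult[of a b y] by (simp add: chebT'_eq_chebU algebra_simps)
  then show ?thesis
    using False by simp
qed auto

lemma chebT_cong: "[y = y'] (mod M) \<Longrightarrow> [chebT k y = chebT k y'] (mod M)"
  by (induction k rule: induct_nat_012) (auto intro!: cong_diff cong_mult)

lemma chebU_cong: "[y = y'] (mod M) \<Longrightarrow> [chebU k y = chebU k y'] (mod M)"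
  by (induction k rule: induct_nat_012) (auto intro!: cong_diff cong_mult)

lemma chebT'_cong: "[y = y'] (mod M) \<Longrightarrow> [chebT' k y = chebT' k y'] (mod M)"
  unfolding chebT'_eq_chebU by (intro cong_mult cong_refl chebU_cong)

lemma chebT_one [simp]: "chebT k 1 = 1"
  and chebU_one [simp]: "chebU k 1 = int k"
  by (induction k) (simp_all add: chebT_Suc chebU_Suc)

lemma chebT_uminus: "chebT k (- y) = (-1) ^ k * chebT k y"
  and chebU_uminus: "chebU k (- y) = (-1) ^ Suc k * chebU k y"
  by (induction k) (simp_all add: chebT_Suc chebU_Suc algebra_simps)

lemma chebT_odd_sub:
  "chebT (2 * k + 1) y - y = 2 * (y\<^sup>2 - 1) * chebU (k + 1) y * chebU k y"
proof -
  have "2 * k + 1 = Suc k + k"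
    by simp
  then have "chebT (2 * k + 1) y - y - 2 * (y\<^sup>2 - 1) * chebU (k + 1) y * chebU k y
      = y * (chebT k y ^ 2 - (y\<^sup>2 - 1) * chebU k y ^ 2 - 1)"
    by (simp only: chebT_add) (simp add: chebT_Suc chebU_Suc algebra_simps power2_eq_square)
  then show ?thesis
    by (simp add: chebT_chebU_pell)
qed

lemma chebU_odd: "chebU (2 * k + 1) y = chebU (k + 1) y ^ 2 - chebU k y ^ 2"
proof -
  have "2 * k + 1 = Suc k + k"
    by simp
  then show ?thesis
    by (simp only: chebU_add) (simp add: chebT_Suc chebU_Suc algebra_simps power2_eq_square)
qed

lemma chebU_consecutive_pell:
  "chebU (k + 1) y ^ 2 - 2 * y * chebU (k + 1) y * chebU k y + chebU k y ^ 2 = 1"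
  using chebT_chebU_pell[of k y] by (simp add: chebU_Suc algebra_simps power2_eq_square)

lemma chebT_chebU_periodic:
  assumes "[chebT r x = 1] (mod M)" "[chebU r x = 0] (mod M)"
  shows "[chebT (q * r + k) x = chebT k x] (mod M) \<and> [chebU (q * r + k) x = chebU k x] (mod M)"
proof (induction q)
  case (Suc q)
  have "[chebT r x * chebT (q * r + k) x + (x\<^sup>2 - 1) * chebU r x * chebU (q * r + k) x
      = 1 * chebT k x + (x\<^sup>2 - 1) * 0 * chebU k x] (mod M)"
    and "[chebT r x * chebU (q * r + k) x + chebU r x * chebT (q * r + k) x
      = 1 * chebU k x + 0 * chebT k x] (mod M)"
    using assms Suc by (intro cong_add cong_mult cong_refl; blast)+
  moreover have "Suc q * r + k = r + (q * r + k)"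
    by simp
  ultimately show ?case
    by (simp only: chebT_add chebU_add) simp
qed simp

lemma chebT_chebT'_power_cong:
  assumes "[chebT M x = x] (mod Q)"
  shows "[chebT (M ^ j) x = x] (mod Q) \<and> [chebT' (M ^ j) x = chebT' M x ^ j] (mod Q)"
proof (induction j)
  case 0
  show ?case
    by (simp add: chebT'_eq_chebU)
next
  case (Suc j)
  then have T: "[chebT (M ^ j) x = x] (mod Q)" and T': "[chebT' (M ^ j) x = chebT' M x ^ j] (mod Q)"
    by blast+
  have "[chebT M (chebT (M ^ j) x) = x] (mod Q)"
    using chebT_cong[OF T, of M] assms by (rule cong_trans)
  moreover have "[chebT' M (chebT (M ^ j) x) * chebT' (M ^ j) x = chebT' M x * chebT' M x ^ j] (mod Q)"
    by (intro cong_mult chebT'_cong T T')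
  ultimately show ?case
    by (simp add: chebT_mult chebT'_mult)
qed

section \<open>The Frobenius modulo p\<close>

lemma freshmans_dream_dvd:
  fixes x y :: "'a::comm_ring_1"
  assumes "prime p"
  shows "of_nat p dvd (x + y) ^ p - x ^ p - y ^ p"
proof -
  let ?f = "\<lambda>k. of_nat (p choose k) * x ^ k * y ^ (p - k)"
  have "(x + y) ^ p = (\<Sum>k\<in>{..p} - {0, p}. ?f k) + (\<Sum>k\<in>{0, p}. ?f k)"
    unfolding binomial_ring by (rule sum.subset_diff) auto
  also have "(\<Sum>k\<in>{0, p}. ?f k) = x ^ p + y ^ p"
    using prime_gt_0_nat[OF assms] by (simp add: add.commute)
  finally have "(x + y) ^ p - x ^ p - y ^ p = (\<Sum>k\<in>{..p} - {0, p}. ?f k)"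
    by (simp add: algebra_simps)
  also have "of_nat p dvd \<dots>"
  proof (rule dvd_sum)
    fix k assume "k \<in> {..p} - {0, p}"
    then have "p dvd p choose k"
      using assms by (intro dvd_choose_prime) auto
    then obtain c where "p choose k = p * c" ..
    then show "of_nat p dvd ?f k"
      by (simp add: mult.assoc)
  qed
  finally show ?thesis .
qed

text \<open>Polynomials modulo X^2 - d model the ring Z[sqrt d]; the linear remainder [:c0, c1:]
  stands for c0 + c1 sqrt d.\<close>

lemma X2_minus_const_division:
  fixes f :: "'a::comm_ring_1 poly"
  shows "\<exists>F c0 c1. f = [:-d, 0, 1:] * F + [:c0, c1:]"
proof (induction f)
  case 0
  have "(0::'a poly) = [:-d, 0, 1:] * 0 + [:0, 0:]"
    by simp
  then show ?case
    by blast
next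
  case (pCons a f)
  then obtain F c0 c1 where "f = [:-d, 0, 1:] * F + [:c0, c1:]"
    by blast
  then have "pCons a f = [:-d, 0, 1:] * ([:0, 1:] * F + [:c1:]) + [:a + d * c1, c0:]"
    by (simp add: poly_eq_iff algebra_simps coeff_pCons split: nat.split)
  then show ?case
    by blast
qed

lemma X2_minus_const_mult_eq_linearD:
  fixes F :: "'a::idom poly"
  assumes "[:-d, 0, 1:] * F = [:a, b:]"
  shows "a = 0 \<and> b = 0"
proof (cases "F = 0")
  case False
  then have "degree ([:-d, 0, 1:] * F) = 2 + degree F"
    by (subst degree_mult_eq) auto
  moreover have "degree [:a, b:] \<le> 1"
    by simp
  ultimately show ?thesis
    using assms by simp
qed (use assms in simp)

lemma X_plus_const_power_division:
  "\<exists>A. [:y, 1:] ^ k = [:-(y\<^sup>2 - 1), 0, 1:] * A + [:chebT k y, chebU k y:]"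
proof (induction k)
  case 0
  show ?case
    by (rule exI[of _ 0]) (simp add: one_pCons)
next
  case (Suc k)
  then obtain A where A: "[:y, 1:] ^ k = [:-(y\<^sup>2 - 1), 0, 1:] * A + [:chebT k y, chebU k y:]"
    by blast
  have "[:y, 1:] ^ Suc k
      = [:-(y\<^sup>2 - 1), 0, 1:] * ([:y, 1:] * A + [:chebU k y:]) + [:chebT (Suc k) y, chebU (Suc k) y:]"
    by (simp add: A chebT_Suc chebU_Suc poly_eq_iff algebra_simps coeff_pCons split: nat.split)
  then show ?case
    by blast
qed

lemma X_odd_power_division:
  fixes d :: "'a::comm_ring_1"
  shows "\<exists>B. [:0, 1:] ^ (2 * h + 1) = [:-d, 0, 1:] * B + [:0, d ^ h:]"
proof -
  have X2: "[:0, 1:] ^ 2 = [:-d, 0, 1:] + [:d:]"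
    by (simp add: power2_eq_square)
  obtain S where "([:0, 1:] ^ 2) ^ h - [:d:] ^ h = ([:0, 1:] ^ 2 - [:d:]) * S"
    using power_diff_sumr2 by blast
  then have "([:0, 1:] ^ 2) ^ h = [:-d, 0, 1:] * S + [:d ^ h:]"
    by (simp add: X2 poly_const_pow algebra_simps)
  have "[:0, 1:] ^ (2 * h + 1) = [:0, 1:] * ([:0, 1:] ^ 2) ^ h"
    by (simp add: power_mult)
  also have "\<dots> = [:-d, 0, 1:] * ([:0, 1:] * S) + [:0, d ^ h:]"
    unfolding \<open>([:0, 1:] ^ 2) ^ h = _\<close> by (simp add: algebra_simps)
  finally have "[:0, 1:] ^ (2 * h + 1) = [:-d, 0, 1:] * ([:0, 1:] * S) + [:0, d ^ h:]" .
  then show ?thesis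
    by blast
qed

lemma chebT_chebU_prime_cong:
  assumes "prime p" "odd p"
  shows "[chebT p y = y ^ p] (mod int p)"
    and "[chebU p y = (y\<^sup>2 - 1) ^ ((p - 1) div 2)] (mod int p)"
proof -
  define Q where "Q = [:-(y\<^sup>2 - 1), 0, 1:]"
  define h where "h = (p - 1) div 2"
  have p: "p = 2 * h + 1"
    using assms(2) unfolding h_def by presburger
  obtain A where A: "[:y, 1:] ^ p = Q * A + [:chebT p y, chebU p y:]"
    using X_plus_const_power_division unfolding Q_def by blast
  obtain B where B: "[:0, 1:] ^ p = Q * B + [:0, (y\<^sup>2 - 1) ^ h:]"
    using X_odd_power_division unfolding Q_def p by blast
  obtain E where E: "[:y, 1:] ^ p - [:y ^ p:] - [:0, 1:] ^ p = of_nat p * E"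
    using freshmans_dream_dvd[OF assms(1), of "[:y:]" "[:0, 1:]"]
    by (auto simp: poly_const_pow)
  obtain F e0 e1 where F: "E = Q * F + [:e0, e1:]"
    using X2_minus_const_division unfolding Q_def by blast
  have "Q * (A - B - of_nat p * F)
      = ([:y, 1:] ^ p - [:y ^ p:] - [:0, 1:] ^ p - of_nat p * E)
        + [:y ^ p:] + [:0, (y\<^sup>2 - 1) ^ h:] + of_nat p * [:e0, e1:] - [:chebT p y, chebU p y:]"
    unfolding A B F by (simp add: algebra_simps)
  also have "\<dots> = [:y ^ p + int p * e0 - chebT p y, (y\<^sup>2 - 1) ^ h + int p * e1 - chebU p y:]"
    by (simp add: E of_nat_poly)
  finally have "Q * (A - B - of_nat p * F)
      = [:y ^ p + int p * e0 - chebT p y, (y\<^sup>2 - 1) ^ h + int p * e1 - chebU p y:]" .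
  then have "y ^ p + int p * e0 - chebT p y = 0 \<and> (y\<^sup>2 - 1) ^ h + int p * e1 - chebU p y = 0"
    unfolding Q_def by (rule X2_minus_const_mult_eq_linearD)
  then have "chebT p y = y ^ p + int p * e0" "chebU p y = (y\<^sup>2 - 1) ^ h + int p * e1"
    by simp_all
  then show "[chebT p y = y ^ p] (mod int p)"
    and "[chebU p y = (y\<^sup>2 - 1) ^ ((p - 1) div 2)] (mod int p)"
    unfolding h_def by (simp_all add: cong_iff_dvd_diff)
qed

lemma fermat_int_cong:
  assumes "prime p"
  shows "[y ^ p = y] (mod int p)"
proof (cases "int p dvd y")
  case True
  moreover have "y dvd y ^ p"
    using prime_gt_0_nat[OF assms] by (simp add: dvd_power)
  ultimately show ?thesis
    by (auto simp: cong_iff_dvd_diff intro: dvd_trans)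
next
  case False
  have "prime (int p)"
    using assms by simp
  then have "coprime y (int p)"
    using prime_imp_coprime False by (metis coprime_commute)
  moreover have "residues (int p)"
    using prime_gt_1_nat[OF assms] by (simp add: residues_def)
  ultimately have "[y ^ (p - 1) = 1] (mod int p)"
    using residues.euler_theorem totient_prime[OF assms] by fastforce
  then have "[y ^ (p - 1) * y = 1 * y] (mod int p)"
    by (rule cong_mult) simp
  then show ?thesis
    using prime_gt_0_nat[OF assms] by (simp flip: power_Suc2)
qed

lemma prime_dvd_square_sub_one:
  assumes "prime p" "int p dvd x\<^sup>2 - 1"
  shows "[x = 1] (mod int p) \<or> [x = -1] (mod int p)"
proof -
  have "int p dvd (x - 1) * (x + 1)"
    using assms(2) by (simp add: algebra_simps power2_eq_square)
  then show ?thesis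
    using assms(1) by (simp add: prime_dvd_mult_iff cong_iff_dvd_diff)
qed

lemma chebT_prime_cong:
  assumes "prime p" "p > 2"
  shows "[chebT p x = x] (mod int p)"
  using chebT_chebU_prime_cong(1)[of p x] fermat_int_cong[of p x] assms prime_odd_nat
  by (blast intro: cong_trans)

lemma chebU_prime_cong_pm_one:
  assumes "prime p" "p > 2" "\<not> int p dvd x\<^sup>2 - 1"
  shows "[chebU p x = 1] (mod int p) \<or> [chebU p x = -1] (mod int p)"
proof -
  define D where "D = x\<^sup>2 - 1"
  have "[Legendre D (int p) = D ^ ((p - 1) div 2)] (mod int p)"
    using euler_criterion[of p D] assms(1,2) by simp
  moreover have "[chebU p x = D ^ ((p - 1) div 2)] (mod int p)"
    using chebT_chebU_prime_cong(2)[of p x] assms(1,2) prime_odd_nat unfolding D_def by blast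
  ultimately have "[chebU p x = Legendre D (int p)] (mod int p)"
    by (meson cong_sym cong_trans)
  moreover have "Legendre D (int p) \<in> {1, -1}"
    using assms(3) unfolding D_def Legendre_def by (auto simp: cong_0_iff)
  ultimately show ?thesis
    by auto
qed

text \<open>Modulo p, (x + sqrt D)^p = x + (D/p) sqrt D with the Legendre symbol (D/p) = 1 or -1, so
  the unit x + sqrt D has order dividing p - (D/p).\<close>

lemma chebT_chebU_period_mod_prime:
  assumes "prime p" "p > 2" "\<not> int p dvd x\<^sup>2 - 1"
  shows "\<exists>r \<in> {p - 1, p + 1}. [chebT r x = 1] (mod int p) \<and> [chebU r x = 0] (mod int p)"
proof -
  define D where "D = x\<^sup>2 - 1"
  have T: "[chebT p x = x] (mod int p)"
    using chebT_prime_cong[OF assms(1,2)] .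
  have xD: "x * x - D * 1 = 1" "x * x + D * (-1) = 1"
    unfolding D_def by (simp_all add: power2_eq_square)
  consider "[chebU p x = 1] (mod int p)" | "[chebU p x = -1] (mod int p)"
    using chebU_prime_cong_pm_one[OF assms] by blast
  then show ?thesis
  proof cases
    case 1
    have "Suc (p - 1) = p"
      using assms(2) by simp
    then have "chebT (p - 1) x = x * chebT p x - D * chebU p x"
      and "chebU (p - 1) x = x * chebU p x - chebT p x"
      using chebT_chebU_pred[of "p - 1" x] unfolding D_def by simp_all
    moreover have "[x * chebT p x - D * chebU p x = x * x - D * 1] (mod int p)"
      and "[x * chebU p x - chebT p x = x * 1 - x] (mod int p)"
      by (intro cong_diff cong_mult cong_refl T 1)+
    ultimately show ?thesis
      using xD by auto
  next
    case 2
    have "chebT (p + 1) x = x * chebT p x + D * chebU p x"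
      and "chebU (p + 1) x = x * chebU p x + chebT p x"
      using chebT_Suc[of p x] chebU_Suc[of p x] unfolding D_def by (simp_all add: algebra_simps)
    moreover have "[x * chebT p x + D * chebU p x = x * x + D * (-1)] (mod int p)"
      and "[x * chebU p x + chebT p x = x * (-1) + x] (mod int p)"
      by (intro cong_add cong_mult cong_refl T 2)+
    ultimately show ?thesis
      using xD by auto
  qed
qed

section \<open>The period and the order modulo p\<close>

lemma odd_if_coprime_prime_square_sub_one:
  fixes p n :: nat
  assumes "prime p" "p > 2" "coprime n (p\<^sup>2 - 1)"
  shows "odd n"
proof
  assume "even n"
  moreover have "even (p\<^sup>2 - 1)"
    using assms(1,2) prime_odd_nat by simp
  ultimately have "\<not> coprime n (p\<^sup>2 - 1)"
    by (intro not_coprimeI[of 2]) auto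
  then show False
    using assms(3) by contradiction
qed

lemma chebT_odd_cong_self_if_square_cong_one:
  assumes "prime p" "int p dvd x\<^sup>2 - 1" "odd n"
  shows "[chebT n x = x] (mod int p)"
  using prime_dvd_square_sub_one[OF assms(1,2)]
proof
  assume x: "[x = 1] (mod int p)"
  have "[chebT n x = 1] (mod int p)"
    using chebT_cong[OF x, of n] by simp
  then show ?thesis
    using cong_sym[OF x] by (rule cong_trans)
next
  assume x: "[x = -1] (mod int p)"
  have "chebT n (-1) = -1"
    using chebT_uminus[of n 1] assms(3) by simp
  then have "[chebT n x = -1] (mod int p)"
    using chebT_cong[OF x, of n] by simp
  then show ?thesis
    using cong_sym[OF x] by (rule cong_trans)
qed

lemma totient_prime_pm_one_less:
  assumes "prime p" "p > 2" "r \<in> {p - 1, p + 1}"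
  shows "totient r < p"
proof (cases "r = p - 1")
  case True
  then show ?thesis
    using totient_le[of r] assms(2) by simp
next
  case False
  then have "r = p + 1"
    using assms(3) by simp
  then have "totient r < p + 1" "even (totient r)" "odd p"
    using totient_less[of r] totient_even[of r] assms(1,2) prime_odd_nat by simp_all
  then show ?thesis
    by (auto simp: less_Suc_eq)
qed

lemma exists_chebT_power_return_mod_prime:
  fixes p n :: nat
  assumes "prime p" "p > 2" "coprime n (p\<^sup>2 - 1)"
  shows "\<exists>N > 0. N < p \<and> [chebT (n ^ N) x = x] (mod int p)"
proof (cases "int p dvd x\<^sup>2 - 1")
  case True
  then show ?thesis
    using chebT_odd_cong_self_if_square_cong_one[OF assms(1) True]
      odd_if_coprime_prime_square_sub_one[OF assms] assms(2)
    by (intro exI[of _ 1]) auto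
next
  case False
  then obtain r where r: "r \<in> {p - 1, p + 1}" "[chebT r x = 1] (mod int p)" "[chebU r x = 0] (mod int p)"
    using chebT_chebU_period_mod_prime assms(1,2) by blast
  have r1: "r > 1"
    using r(1) assms(2) by auto
  have "p\<^sup>2 - 1 = (p - 1) * (p + 1)"
    using assms(2) by (cases p) (simp_all add: power2_eq_square algebra_simps)
  moreover have "r dvd (p - 1) * (p + 1)"
    using r(1) by (metis dvd_triv_left dvd_triv_right insertE singletonD)
  ultimately have "coprime n r"
    using coprime_divisors[OF dvd_refl _ assms(3)] by simp
  then have "n ^ totient r mod r = 1"
    using euler_theorem[of n r] r1 by (simp add: cong_def)
  then obtain q where q: "n ^ totient r = q * r + 1"
    using div_mult_mod_eq[of "n ^ totient r" r] by (intro that[of "n ^ totient r div r"]) simp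
  have "[chebT (q * r + 1) x = chebT 1 x] (mod int p)"
    using chebT_chebU_periodic[OF r(2,3)] by blast
  then have "[chebT (n ^ totient r) x = x] (mod int p)"
    unfolding q by simp
  then show ?thesis
    using totient_prime_pm_one_less[OF assms(1,2) r(1)] r1 by (intro exI[of _ "totient r"]) simp
qed

lemma cheb_period_bounds:
  fixes p n :: nat
  assumes "prime p" "p > 2" "coprime n (p\<^sup>2 - 1)"
  shows "0 < cheb_period p n x" "cheb_period p n x < p"
    and "[chebT (n ^ cheb_period p n x) x = x] (mod int p)"
proof -
  obtain N where N: "N > 0" "N < p" "[chebT (n ^ N) x = x] (mod int p)"
    using exists_chebT_power_return_mod_prime[OF assms] by blast
  have "0 < cheb_period p n x \<and> [chebT (n ^ cheb_period p n x) x = x] (mod int p)"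
    unfolding cheb_period_def by (rule LeastI[of _ N]) (use N in simp)
  then show "0 < cheb_period p n x" "[chebT (n ^ cheb_period p n x) x = x] (mod int p)"
    by simp_all
  have "cheb_period p n x \<le> N"
    unfolding cheb_period_def by (rule Least_le) (use N in simp)
  then show "cheb_period p n x < p"
    using N(2) by simp
qed

lemma ord_int_prime_bounds:
  assumes "prime p" "coprime (int p) a"
  shows "0 < ord (int p) a" "ord (int p) a < p" "[a ^ ord (int p) a = 1] (mod int p)"
proof -
  define P where "P = (\<lambda>d. 0 < d \<and> [a ^ d = 1] (mod int p))"
  have "residues (int p)"
    using prime_gt_1_nat[OF assms(1)] by (simp add: residues_def)
  then have "[a ^ (p - 1) = 1] (mod int p)"
    using residues.euler_theorem[of "int p" a] assms by (simp add: coprime_commute totient_prime)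
  then have P: "P (p - 1)"
    unfolding P_def using prime_gt_1_nat[OF assms(1)] by simp
  have ord: "ord (int p) a = Least P"
    unfolding ord_def P_def using assms(2) by simp
  show "0 < ord (int p) a" "[a ^ ord (int p) a = 1] (mod int p)"
    using LeastI[of P, OF P] unfolding ord P_def by simp_all
  have "ord (int p) a \<le> p - 1"
    unfolding ord by (rule Least_le[of P, OF P])
  then show "ord (int p) a < p"
    using prime_gt_1_nat[OF assms(1)] by simp
qed

lemma chebU_square_cong_one:
  assumes "prime p" "\<not> int p dvd x\<^sup>2 - 1" "[chebT m x = x] (mod int p ^ w)"
  shows "int p ^ w dvd chebU m x ^ 2 - 1"
proof -
  have "(x\<^sup>2 - 1) * (chebU m x ^ 2 - 1) = (chebT m x - x) * (chebT m x + x)"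
    using chebT_chebU_pell[of m x] by (simp add: algebra_simps power2_eq_square)
  moreover have "int p ^ w dvd chebT m x - x"
    using assms(3) by (simp add: cong_iff_dvd_diff dvd_diff_commute)
  ultimately have "int p ^ w dvd (x\<^sup>2 - 1) * (chebU m x ^ 2 - 1)"
    by simp
  moreover have "coprime (int p ^ w) (x\<^sup>2 - 1)"
    using assms(1,2) by (simp add: prime_imp_coprime)
  ultimately show ?thesis
    using coprime_dvd_mult_right_iff by blast
qed

lemma coprime_chebT'_mod_prime:
  assumes "prime p" "\<not> p dvd M" "[chebT M x = x] (mod int p)"
  shows "coprime (int p) (chebT' M x)"
proof -
  have "coprime (int p) (int M)"
    using assms(1,2) by (simp add: prime_imp_coprime)
  moreover have "coprime (int p) (chebU M x)"
  proof (cases "int p dvd x\<^sup>2 - 1")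
    case True
    then obtain e where e: "e \<in> {1, -1}" "[x = e] (mod int p)"
      using prime_dvd_square_sub_one[OF assms(1)] by blast
    have "coprime (int p) (chebU M e)"
      using e(1) \<open>coprime (int p) (int M)\<close> by (auto simp: chebU_uminus[of M 1])
    then show ?thesis
      using coprime_cong_cong_right[OF chebU_cong[OF e(2), of M]] by simp
  next
    case False
    have "[chebU M x * chebU M x = 1] (mod int p)"
      using chebU_square_cong_one[OF assms(1) False, of M 1] assms(3)
      by (simp add: cong_iff_dvd_diff dvd_diff_commute power2_eq_square)
    then show ?thesis
      using coprime_cong_cong_right by fastforce
  qed
  ultimately show ?thesis
    by (simp add: chebT'_eq_chebU)
qed

lemma cheb_period_ord_mod_prime:
  fixes p n :: nat and x :: int
  assumes "prime p" "p > 2" "coprime n p" "coprime n (p\<^sup>2 - 1)"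
  defines "N \<equiv> cheb_period p n x"
  defines "l \<equiv> ord (int p) (chebT' (n ^ N) x)"
  shows "\<not> p dvd N * l" and "[chebT' (n ^ (N * l)) x = 1] (mod int p)"
proof -
  have N: "0 < N" "N < p" "[chebT (n ^ N) x = x] (mod int p)"
    unfolding N_def by (fact cheb_period_bounds[OF assms(1,2,4)])+
  have "\<not> p dvd n ^ N"
  proof
    assume "p dvd n ^ N"
    then have "p dvd n"
      using assms(1) prime_dvd_power by blast
    then show False
      using assms(1,3) not_coprimeI[of p n p] by (auto simp: prime_gt_1_nat)
  qed
  then have "coprime (int p) (chebT' (n ^ N) x)"
    by (rule coprime_chebT'_mod_prime[OF assms(1) _ N(3)])
  then have l: "0 < l" "l < p" "[chebT' (n ^ N) x ^ l = 1] (mod int p)"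
    unfolding l_def by (fact ord_int_prime_bounds[OF assms(1)])+
  show "\<not> p dvd N * l"
    using N l assms(1) by (auto simp: prime_dvd_mult_iff dest: dvd_imp_le)
  have "[chebT' ((n ^ N) ^ l) x = chebT' (n ^ N) x ^ l] (mod int p)"
    using chebT_chebT'_power_cong[OF N(3)] by blast
  then show "[chebT' (n ^ (N * l)) x = 1] (mod int p)"
    unfolding power_mult using l(3) by (rule cong_trans)
qed

section \<open>Congruences modulo prime powers\<close>

lemma coprime_int_prime_less:
  assumes "prime p" "0 < c" "c < p"
  shows "coprime (int p) (int c)"
  using assms by (simp add: prime_imp_coprime nat_dvd_not_less)

lemma power_dvd_cancel_unit_mod:
  fixes M :: "'a::{unique_euclidean_semiring, euclidean_semiring_gcd}"
  assumes "[u * t = 1] (mod M)" "M ^ e dvd s * t"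
  shows "M ^ e dvd s"
proof -
  have "coprime (u * t) M"
    using cong_imp_coprime[OF cong_sym[OF assms(1)]] by simp
  then have "coprime (M ^ e) t"
    by (simp add: coprime_commute)
  then show ?thesis
    using assms(2) by (simp add: coprime_dvd_mult_left_iff)
qed

lemma power_cong_one_prime_power_iff:
  fixes p z r :: nat
  assumes "prime p" "[z = 1] (mod p)" "\<not> p dvd r"
  shows "[z ^ r = 1] (mod p ^ w) \<longleftrightarrow> [z = 1] (mod p ^ w)"
proof
  assume "[z = 1] (mod p ^ w)"
  then show "[z ^ r = 1] (mod p ^ w)"
    using cong_pow by fastforce
next
  define S where "S = (\<Sum>i<r. int z ^ i)"
  assume "[z ^ r = 1] (mod p ^ w)"
  then have "[int z ^ r = 1] (mod int p ^ w)"
    using cong_int_iff[of "z ^ r" 1 "p ^ w"] by simp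
  then have "int p ^ w dvd (int z - 1) * S"
    unfolding S_def power_diff_1_eq[symmetric] by (simp add: cong_iff_dvd_diff dvd_diff_commute)
  moreover have "[int z = 1] (mod int p)"
    using assms(2) cong_int_iff[of z 1 p] by simp
  then have "[S = (\<Sum>i<r. 1)] (mod int p)"
    unfolding S_def by (intro cong_sum) (metis cong_pow power_one)
  then have "coprime (int p) S \<longleftrightarrow> coprime (int p) (int r)"
    by (simp add: coprime_cong_cong_right)
  then have "coprime (int p ^ w) S"
    using prime_imp_coprime[OF assms(1,3)] by simp
  ultimately have "int p ^ w dvd int z - 1"
    by (simp add: coprime_dvd_mult_left_iff)
  then have "[int z = 1] (mod int p ^ w)"
    by (simp add: cong_iff_dvd_diff dvd_diff_commute)
  then show "[z = 1] (mod p ^ w)"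
    using cong_int_iff[of z 1 "p ^ w"] by simp
qed

lemma power_ord_square_cong_one_iff:
  fixes p n K :: nat
  assumes "prime p" "\<not> p dvd K" "[n ^ (2 * K) = 1] (mod p)"
  shows "[n ^ (2 * K) = 1] (mod p ^ w) \<longleftrightarrow> [n ^ (2 * ord p (n\<^sup>2)) = 1] (mod p ^ w)"
proof -
  have "ord p (n\<^sup>2) dvd K"
    using assms(3) by (simp add: ord_divides' power_mult)
  then obtain r where r: "K = ord p (n\<^sup>2) * r"
    by blast
  have "[n ^ (2 * ord p (n\<^sup>2)) = 1] (mod p)"
    using ord[of "n\<^sup>2" p] by (simp add: power_mult)
  moreover have "\<not> p dvd r"
    using assms(2) dvd_mult[of p r "ord p (n\<^sup>2)"] unfolding r by blast
  moreover have "n ^ (2 * K) = (n ^ (2 * ord p (n\<^sup>2))) ^ r"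
    unfolding r by (simp add: power_mult mult.assoc)
  ultimately show ?thesis
    using power_cong_one_prime_power_iff[OF assms(1)] by simp
qed

section \<open>Lifting to prime powers\<close>

lemma chebT'_cong_one_iff_nondegenerate:
  assumes "prime p" "p > 2" "\<not> int p dvd x\<^sup>2 - 1" "w > 0"
    and "[chebT m x = x] (mod int p ^ w)" "[chebT' m x = 1] (mod int p)"
  shows "[int m ^ 2 = 1] (mod int p)"
    and "[chebT' m x = 1] (mod int p ^ w) \<longleftrightarrow> [int m ^ 2 = 1] (mod int p ^ w)"
proof -
  define P U where "P = int p" and "U = chebU m x"
  have U2: "P ^ w dvd U\<^sup>2 - 1"
    using chebU_square_cong_one[OF assms(1,3,5)] unfolding P_def U_def .
  have prod: "(int m * U - 1) * (int m * U + 1) = int m ^ 2 * (U\<^sup>2 - 1) + (int m ^ 2 - 1)"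
    by (simp add: algebra_simps power2_eq_square)
  have dvd_prod_iff: "Q dvd (int m * U - 1) * (int m * U + 1) \<longleftrightarrow> Q dvd int m ^ 2 - 1"
    if "Q dvd U\<^sup>2 - 1" for Q
    unfolding prod using that by (simp add: dvd_add_right_iff)
  have "P dvd P ^ w"
    using assms(4) by simp
  then have U2P: "P dvd U\<^sup>2 - 1"
    using U2 by (rule dvd_trans)
  have mU: "P dvd int m * U - 1"
    using assms(6) unfolding P_def U_def by (simp add: chebT'_eq_chebU cong_iff_dvd_diff)
  then show "[int m ^ 2 = 1] (mod int p)"
    using dvd_prod_iff[OF U2P] unfolding P_def by (simp add: cong_iff_dvd_diff)
  have "[int m * U + 1 = 2] (mod P)"
    using mU by (simp add: cong_iff_dvd_diff algebra_simps)
  moreover have "coprime P 2"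
    using coprime_int_prime_less[OF assms(1), of 2] assms(2) unfolding P_def by simp
  ultimately have "coprime (P ^ w) (int m * U + 1)"
    by (simp add: coprime_cong_cong_right)
  then have "P ^ w dvd int m * U - 1 \<longleftrightarrow> P ^ w dvd (int m * U - 1) * (int m * U + 1)"
    by (simp add: coprime_dvd_mult_left_iff)
  then show "[chebT' m x = 1] (mod int p ^ w) \<longleftrightarrow> [int m ^ 2 = 1] (mod int p ^ w)"
    using dvd_prod_iff[OF U2] unfolding P_def U_def by (simp add: chebT'_eq_chebU cong_iff_dvd_diff)
qed

text \<open>chebU k (1 + h) = k + h (k^3 - k)/3 + O(h^2); the factor 3 clears the denominator, and
  this is where p > 3 is needed.\<close>

lemma chebU_near_one_expansion:
  "\<exists>c. 3 * chebU k (1 + h) = 3 * int k + h * (int k ^ 3 - int k) + h\<^sup>2 * c"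
proof (induction k rule: induct_nat_012)
  case 0
  show ?case
    by (rule exI[of _ 0]) simp
next
  case 1
  show ?case
    by (rule exI[of _ 0]) simp
next
  case (ge2 k)
  then obtain c0 c1
    where c0: "3 * chebU k (1 + h) = 3 * int k + h * (int k ^ 3 - int k) + h\<^sup>2 * c0"
      and c1: "3 * chebU (Suc k) (1 + h)
        = 3 * int (Suc k) + h * (int (Suc k) ^ 3 - int (Suc k)) + h\<^sup>2 * c1"
    by blast
  have "3 * chebU (Suc (Suc k)) (1 + h) = 2 * (1 + h) * (3 * chebU (Suc k) (1 + h)) - 3 * chebU k (1 + h)"
    by simp
  also have "\<dots> = 3 * int (Suc (Suc k)) + h * (int (Suc (Suc k)) ^ 3 - int (Suc (Suc k)))
      + h\<^sup>2 * (2 * (int (Suc k) ^ 3 - int (Suc k)) + 2 * (1 + h) * c1 - c0)"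
    unfolding c0 c1 by (simp add: algebra_simps power2_eq_square power3_eq_cube)
  finally show ?case
    by blast
qed

lemma chebU_prime_near_one:
  assumes "prime p" "p > 3" "[y = 1] (mod int p)"
  shows "(int p)\<^sup>2 dvd chebU p y - int p"
proof -
  define h where "h = y - 1"
  have hp: "int p dvd h"
    using assms(3) unfolding h_def by (simp add: cong_iff_dvd_diff)
  obtain c where c: "3 * chebU p (1 + h) = 3 * int p + h * (int p ^ 3 - int p) + h\<^sup>2 * c"
    using chebU_near_one_expansion by blast
  have "3 * (chebU p y - int p) = h * int p * (int p ^ 2 - 1) + h\<^sup>2 * c"
    using c unfolding h_def by (simp add: algebra_simps power2_eq_square power3_eq_cube)
  moreover have "(int p)\<^sup>2 dvd h * int p * (int p ^ 2 - 1)" "(int p)\<^sup>2 dvd h\<^sup>2 * c"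
    using hp by (simp_all add: power2_eq_square mult_dvd_mono)
  ultimately have "(int p)\<^sup>2 dvd 3 * (chebU p y - int p)"
    by simp
  moreover have "coprime ((int p)\<^sup>2) 3"
    using coprime_int_prime_less[OF assms(1), of 3] assms(2) by simp
  ultimately show ?thesis
    using coprime_dvd_mult_right_iff by blast
qed

lemma chebU_near_one_cong:
  assumes "prime p" "p > 3" "[y = 1] (mod int p)" "(int p) ^ e dvd int j"
  shows "(int p) ^ Suc e dvd chebU j y - int j"
  using assms(3,4)
proof (induction e arbitrary: y j)
  case 0
  have "[chebU j y = chebU j 1] (mod int p)"
    using chebU_cong[OF "0.prems"(1)] .
  then show ?case
    by (simp add: cong_iff_dvd_diff)
next
  case (Suc e)
  obtain g where g: "int j = int p ^ Suc e * g"
    using Suc.prems(2) by blast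
  then obtain j' where j': "j = p * j'"
    by (metis dvd_triv_left int_dvd_int_iff mult.assoc power_Suc dvdE)
  have g': "int j' = int p ^ e * g"
    using g j' prime_gt_0_nat[OF assms(1)] by simp
  then obtain c where c: "chebU j' y - int j' = int p ^ Suc e * c"
    using Suc.IH[OF Suc.prems(1)] by (metis dvd_triv_left dvdE)
  have "[chebT j' y = chebT j' 1] (mod int p)"
    using chebT_cong[OF Suc.prems(1)] .
  then obtain d where d: "chebU p (chebT j' y) - int p = (int p)\<^sup>2 * d"
    using chebU_prime_near_one[OF assms(1,2)] by (metis chebT_one dvdE)
  have "chebU j y = chebU p (chebT j' y) * chebU j' y"
    unfolding j' by (rule chebU_mult)
  then have "chebU j y - int j = int p ^ Suc (Suc e) * (d * g + c + int p * d * c)"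
    using c d g' unfolding j' by (simp add: algebra_simps power2_eq_square eq_diff_eq)
  then show ?case
    by simp
qed

lemma chebU_near_one_dvd_index:
  assumes "prime p" "p > 3" "[y = 1] (mod int p)" "(int p) ^ e dvd chebU j y"
  shows "(int p) ^ e dvd int j"
  using assms(4)
proof (induction e)
  case (Suc e)
  then have "(int p) ^ e dvd int j"
    by (meson dvd_trans le_imp_power_dvd le_SucI order_refl)
  then have "(int p) ^ Suc e dvd chebU j y - int j"
    by (rule chebU_near_one_cong[OF assms(1-3)])
  then have "(int p) ^ Suc e dvd chebU j y - (chebU j y - int j)"
    using Suc.prems by (rule dvd_diff[rotated])
  then show ?case
    by simp
qed simp

text \<open>When p divides y^2 - 1 exactly once, Pell's equation only gives chebU m y ^ 2 = 1 modulo
  p^(w - 1). The missing factor p comes from chebT_odd_sub, which splits T_m(y) - y for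
  m = 2k + 1 into chebU (k + 1) y * chebU k y, and from the expansion above.\<close>

lemma near_one_chebU_halves_dvd:
  assumes "prime p" "p > 2" "[y = 1] (mod int p)" "\<not> (int p)\<^sup>2 dvd y\<^sup>2 - 1"
    and "w > 0" "[chebT (2 * k + 1) y = y] (mod int p ^ w)"
  shows "(int p) ^ (w - 1) dvd chebU (k + 1) y * chebU k y"
proof -
  define P where "P = int p"
  have "y\<^sup>2 - 1 = (y - 1) * (y + 1)"
    by (simp add: algebra_simps power2_eq_square)
  then have "P dvd y\<^sup>2 - 1"
    using assms(3) unfolding P_def by (simp add: cong_iff_dvd_diff)
  then obtain c where c: "y\<^sup>2 - 1 = P * c"
    unfolding dvd_def by blast
  have "\<not> P dvd c"
    using assms(4) unfolding P_def c by (auto simp: power2_eq_square)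
  have "P ^ w = P * P ^ (w - 1)"
    using assms(5) by (simp flip: power_Suc)
  moreover have "chebT (2 * k + 1) y - y = P * (2 * c * (chebU (k + 1) y * chebU k y))"
    using chebT_odd_sub[of k y] unfolding c by (simp add: ac_simps)
  moreover have "P ^ w dvd chebT (2 * k + 1) y - y"
    using assms(6) unfolding P_def by (simp add: cong_iff_dvd_diff dvd_diff_commute)
  ultimately have "P * P ^ (w - 1) dvd P * (2 * c * (chebU (k + 1) y * chebU k y))"
    by simp
  then have "P ^ (w - 1) dvd 2 * c * (chebU (k + 1) y * chebU k y)"
    unfolding P_def using assms(1) by simp
  moreover have "coprime (P ^ (w - 1)) (2 * c)"
    using coprime_int_prime_less[OF assms(1), of 2] assms(1,2) \<open>\<not> P dvd c\<close> unfolding P_def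
    by (simp add: prime_imp_coprime)
  ultimately show ?thesis
    unfolding P_def by (simp add: coprime_dvd_mult_right_iff)
qed

lemma near_one_quadratic_cong:
  assumes "prime p" "p > 3" "[y = 1] (mod int p)" "w \<ge> 2"
    and "(int p) ^ (w - 1) dvd chebU j y * t" "[int m * t = 1] (mod int p)"
  shows "[2 * int j + 2 * (int m * y * t) * chebU j y - 2 * int m * chebU j y ^ 2 = 4 * int j]
    (mod int p ^ w)"
proof -
  define P s q where "P = int p" and "s = chebU j y" and "q = int m * y * t"
  have w: "Suc (w - 1) = w"
    using assms(4) by simp
  have s: "P ^ (w - 1) dvd s"
    using power_dvd_cancel_unit_mod[OF assms(6,5)] unfolding P_def s_def .
  have "[int m * y * t = int m * 1 * t] (mod int p)"
    using assms(3) by (intro cong_mult cong_refl)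
  then have "[q = 1] (mod int p)"
    using assms(6) unfolding q_def by (simp add: cong_trans)
  then have q: "P dvd q - 1"
    unfolding P_def by (simp add: cong_iff_dvd_diff dvd_diff_commute)
  have "P ^ (w - 1) dvd int j"
    using chebU_near_one_dvd_index[OF assms(1-3)] s unfolding P_def s_def .
  then have sj: "P ^ w dvd s - int j"
    using chebU_near_one_cong[OF assms(1-3), of "w - 1" j] unfolding P_def s_def w by simp
  have "P ^ w dvd P ^ (w - 1) * P ^ (w - 1)"
    unfolding power_add[symmetric] using assms(4) by (intro le_imp_power_dvd) simp
  then have s2: "P ^ w dvd s\<^sup>2"
    using mult_dvd_mono[OF s s] unfolding power2_eq_square by (rule dvd_trans)
  have sq: "P ^ w dvd s * (q - 1)"
    using mult_dvd_mono[OF s q] w by (simp flip: power_Suc2)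
  have "P ^ w dvd 2 * (s - int j) + 2 * (s * (q - 1)) - 2 * int m * s\<^sup>2"
    using dvd_mult[OF sj, of 2] dvd_mult[OF sq, of 2] dvd_mult[OF s2, of "2 * int m"]
    by (intro dvd_diff dvd_add) (simp_all only: mult.assoc)
  also have "2 * (s - int j) + 2 * (s * (q - 1)) - 2 * int m * s\<^sup>2
      = (2 * int j + 2 * q * s - 2 * int m * s\<^sup>2) - 4 * int j"
    by (simp add: algebra_simps)
  finally show ?thesis
    unfolding P_def s_def q_def by (simp add: cong_iff_dvd_diff dvd_diff_commute)
qed

lemma chebT'_near_one_cong_of_dvd_half:
  assumes "prime p" "p > 3" "[y = 1] (mod int p)" "w \<ge> 2"
    and "(int p) ^ (w - 1) dvd chebU (k + 1) y * chebU k y" "int p dvd int k"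
  shows "[chebT' (2 * k + 1) y - 1 = 4 * int k] (mod int p ^ w)"
proof -
  define m a b where "m = 2 * k + 1" and "a = chebU (k + 1) y" and "b = chebU k y"
  have a2: "a\<^sup>2 = 1 + 2 * y * a * b - b\<^sup>2"
    using chebU_consecutive_pell[of k y] unfolding a_def b_def by simp
  have "[int m * a = 1 * 1] (mod int p)"
  proof (rule cong_mult)
    show "[int m = 1] (mod int p)"
      using assms(6) unfolding m_def by (simp add: cong_iff_dvd_diff)
    have "int p dvd a - (int k + 1)"
      using chebU_near_one_cong[OF assms(1-3), of 0 "k + 1"] unfolding a_def by (simp add: add.commute)
    then have "int p dvd a - (int k + 1) + int k"
      using assms(6) by (rule dvd_add)
    then show "[a = 1] (mod int p)"
      by (simp add: cong_iff_dvd_diff dvd_diff_commute)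
  qed
  then have "[2 * int k + 2 * (int m * y * a) * b - 2 * int m * b\<^sup>2 = 4 * int k] (mod int p ^ w)"
    using near_one_quadratic_cong[OF assms(1-4), of k a m] assms(5) unfolding a_def b_def
    by (simp add: mult.commute)
  moreover have "chebT' (2 * k + 1) y - 1 = 2 * int k + 2 * (int m * y * a) * b - 2 * int m * b\<^sup>2"
    unfolding chebT'_eq_chebU chebU_odd a_def[symmetric] b_def[symmetric] a2
    by (simp add: m_def algebra_simps)
  ultimately show ?thesis
    by (simp only:)
qed

lemma chebT'_near_one_cong_of_dvd_half_succ:
  assumes "prime p" "p > 3" "[y = 1] (mod int p)" "w \<ge> 2"
    and "(int p) ^ (w - 1) dvd chebU (k + 1) y * chebU k y" "int p dvd int k + 1"
  shows "[1 - chebT' (2 * k + 1) y = 4 * (int k + 1)] (mod int p ^ w)"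
proof -
  define m a b where "m = 2 * k + 1" and "a = chebU (k + 1) y" and "b = chebU k y"
  have b2: "b\<^sup>2 = 1 + 2 * y * a * b - a\<^sup>2"
    using chebU_consecutive_pell[of k y] unfolding a_def b_def by simp
  have "[int m * b = (-1) * (-1)] (mod int p)"
  proof (rule cong_mult)
    show "[int m = -1] (mod int p)"
      using dvd_mult[OF assms(6), of 2] unfolding m_def by (simp add: cong_iff_dvd_diff algebra_simps)
    have "int p dvd b - int k"
      using chebU_near_one_cong[OF assms(1-3), of 0 k] unfolding b_def by simp
    then have "int p dvd b - int k + (int k + 1)"
      using assms(6) by (rule dvd_add)
    then show "[b = -1] (mod int p)"
      by (simp add: cong_iff_dvd_diff dvd_diff_commute)
  qed
  then have "[2 * (int k + 1) + 2 * (int m * y * b) * a - 2 * int m * a\<^sup>2 = 4 * (int k + 1)]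
      (mod int p ^ w)"
    using near_one_quadratic_cong[OF assms(1-4), of "k + 1" b m] assms(5) unfolding a_def b_def
    by (simp add: add.commute)
  moreover have "1 - chebT' (2 * k + 1) y = 2 * (int k + 1) + 2 * (int m * y * b) * a - 2 * int m * a\<^sup>2"
    unfolding chebT'_eq_chebU chebU_odd a_def[symmetric] b_def[symmetric] b2
    by (simp add: m_def algebra_simps)
  ultimately show ?thesis
    by (simp only:)
qed

lemma near_one_square_cong_one:
  assumes "prime p" "p > 3" "[y = 1] (mod int p)" "[chebT' m y = 1] (mod int p)"
  shows "[int m ^ 2 = 1] (mod int p)"
proof -
  have "int p dvd chebU m y - int m"
    using chebU_near_one_cong[OF assms(1-3), of 0 m] by simp
  moreover have "int p dvd int m * chebU m y - 1"
    using assms(4) by (simp add: chebT'_eq_chebU cong_iff_dvd_diff dvd_diff_commute)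
  moreover have "int m ^ 2 - 1 = (int m * chebU m y - 1) - int m * (chebU m y - int m)"
    by (simp add: algebra_simps power2_eq_square)
  ultimately have "int p dvd int m ^ 2 - 1"
    by (metis dvd_diff dvd_mult)
  then show ?thesis
    by (simp add: cong_iff_dvd_diff dvd_diff_commute)
qed

lemma near_one_prime_power_dvd_iff:
  assumes "prime p" "p > 3" "[y = 1] (mod int p)" "\<not> (int p)\<^sup>2 dvd y\<^sup>2 - 1"
    and "w \<ge> 2" "[chebT (2 * k + 1) y = y] (mod int p ^ w)" "[int (2 * k + 1) ^ 2 = 1] (mod int p)"
  shows "int p ^ w dvd chebT' (2 * k + 1) y - 1 \<longleftrightarrow> int p ^ w dvd 4 * int k * (int k + 1)"
proof -
  define P where "P = int p"
  have ab: "int p ^ (w - 1) dvd chebU (k + 1) y * chebU k y"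
    using near_one_chebU_halves_dvd[OF assms(1) _ assms(3,4) _ assms(6)] assms(2,5) by simp
  have "P dvd (2 * int k) * (2 * (int k + 1))"
    using assms(7) unfolding P_def by (simp add: cong_iff_dvd_diff algebra_simps power2_eq_square)
  then have "P dvd 2 * int k \<or> P dvd 2 * (int k + 1)"
    using assms(1) prime_dvd_mult_iff[of P] unfolding P_def by simp
  moreover have "coprime P 2"
    using coprime_int_prime_less[OF assms(1), of 2] assms(2) unfolding P_def by simp
  ultimately consider "P dvd int k" | "P dvd int k + 1"
    using coprime_dvd_mult_right_iff by blast
  then show ?thesis
  proof cases
    case 1
    then have "\<not> P dvd int k + 1"
      using assms(1) unfolding P_def by (metis dvd_add_right_iff not_prime_1 int_dvd_int_iff of_nat_1 nat_dvd_1_iff_1)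
    then have "coprime (P ^ w) (int k + 1)"
      using assms(1) prime_imp_coprime[of P "int k + 1"] unfolding P_def by simp
    then have "P ^ w dvd 4 * int k * (int k + 1) \<longleftrightarrow> P ^ w dvd 4 * int k"
      by (rule coprime_dvd_mult_left_iff)
    moreover have "[chebT' (2 * k + 1) y - 1 = 4 * int k] (mod P ^ w)"
      using chebT'_near_one_cong_of_dvd_half[OF assms(1-3,5) ab] 1 unfolding P_def by simp
    ultimately show ?thesis
      unfolding P_def by (simp add: cong_dvd_iff)
  next
    case 2
    then have "\<not> P dvd int k"
      using assms(1) unfolding P_def by (metis dvd_add_right_iff not_prime_1 int_dvd_int_iff of_nat_1 nat_dvd_1_iff_1)
    then have "coprime (P ^ w) (int k)"
      using assms(1) prime_imp_coprime[of P "int k"] unfolding P_def by simp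
    then have "P ^ w dvd 4 * int k * (int k + 1) \<longleftrightarrow> P ^ w dvd 4 * (int k + 1)"
      using coprime_dvd_mult_right_iff[of "P ^ w" "int k" "4 * (int k + 1)"] by (simp add: ac_simps)
    moreover have "[1 - chebT' (2 * k + 1) y = 4 * (int k + 1)] (mod P ^ w)"
      using chebT'_near_one_cong_of_dvd_half_succ[OF assms(1-3,5) ab] 2 unfolding P_def by simp
    ultimately show ?thesis
      unfolding P_def by (simp add: cong_dvd_iff dvd_diff_commute)
  qed
qed

lemma chebT'_cong_one_iff_near_one:
  assumes "prime p" "p > 3" "[y = 1] (mod int p)" "\<not> (int p)\<^sup>2 dvd y\<^sup>2 - 1"
    and "odd m" "w > 0" "[chebT m y = y] (mod int p ^ w)" "[chebT' m y = 1] (mod int p)"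
  shows "[int m ^ 2 = 1] (mod int p)"
    and "[chebT' m y = 1] (mod int p ^ w) \<longleftrightarrow> [int m ^ 2 = 1] (mod int p ^ w)"
proof -
  show m2: "[int m ^ 2 = 1] (mod int p)"
    using near_one_square_cong_one[OF assms(1-3,8)] .
  show "[chebT' m y = 1] (mod int p ^ w) \<longleftrightarrow> [int m ^ 2 = 1] (mod int p ^ w)"
  proof (cases "w = 1")
    case True
    then show ?thesis
      using assms(8) m2 by simp
  next
    case False
    obtain k where m: "m = 2 * k + 1"
      using assms(5) by (rule oddE)
    have "int p ^ w dvd chebT' m y - 1 \<longleftrightarrow> int p ^ w dvd 4 * int k * (int k + 1)"
      using near_one_prime_power_dvd_iff[OF assms(1-4)] False assms(6,7) m2 unfolding m by simp
    moreover have "int m ^ 2 - 1 = 4 * int k * (int k + 1)"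
      unfolding m by (simp add: algebra_simps power2_eq_square)
    ultimately show ?thesis
      by (simp add: cong_iff_dvd_diff dvd_diff_commute)
  qed
qed

lemma residue_square_one_cases:
  assumes "prime p" "0 \<le> x" "x \<le> int p - 1"
  obtains "x = 1" | "x = int p - 1" | "\<not> int p dvd x\<^sup>2 - 1"
proof (cases "int p dvd x\<^sup>2 - 1")
  case True
  have "[-1 = int p - 1] (mod int p)"
    by (simp add: cong_iff_dvd_diff)
  then have "[x = 1] (mod int p) \<or> [x = int p - 1] (mod int p)"
    using prime_dvd_square_sub_one[OF assms(1) True] by (auto intro: cong_trans)
  then have "x = 1 \<or> x = int p - 1"
    using cong_less_imp_eq_int[OF assms(2), of "int p" 1] cong_less_imp_eq_int[OF assms(2), of "int p" "int p - 1"]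
      assms(1,3) prime_gt_1_nat[OF assms(1)] by auto
  then show ?thesis
    using that by blast
qed (use that in blast)

lemma prime_square_not_dvd_one_sub_square:
  assumes "prime p" "p > 2"
  shows "\<not> (int p)\<^sup>2 dvd (1 - int p)\<^sup>2 - 1"
proof
  assume "(int p)\<^sup>2 dvd (1 - int p)\<^sup>2 - 1"
  then have "int p * int p dvd int p * (int p - 2)"
    by (simp add: power2_eq_square algebra_simps)
  then have "int p dvd int p - 2"
    using assms(1) by simp
  then have "int p dvd int p - (int p - 2)"
    by (rule dvd_diff[OF dvd_refl])
  then have "int p dvd 2"
    by simp
  then have "p dvd 2"
    by presburger
  then show False
    using assms(2) by (auto dest: dvd_imp_le)
qed

lemma chebT'_cong_one_iff_square_cong_one:
  assumes "prime p" "p > 3" "0 \<le> x" "x \<le> int p - 1" "odd m" "w > 0"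
    and "[chebT m x = x] (mod int p ^ w)" "[chebT' m x = 1] (mod int p)"
  shows "[int m ^ 2 = 1] (mod int p) \<and>
    ([chebT' m x = 1] (mod int p ^ w) \<longleftrightarrow> [int m ^ 2 = 1] (mod int p ^ w))"
  using assms(1,3,4)
proof (cases rule: residue_square_one_cases)
  case 1
  then have "chebT' m x = int m ^ 2"
    by (simp add: chebT'_eq_chebU power2_eq_square)
  then show ?thesis
    using assms(8) by simp
next
  case 2
  define y where "y = 1 - int p"
  have x: "x = - y"
    unfolding 2 y_def by simp
  have "chebT m x = - chebT m y" "chebT' m x = chebT' m y"
    unfolding x using assms(5) by (simp_all add: chebT_uminus chebT'_eq_chebU chebU_uminus)
  moreover have "[y = 1] (mod int p)"
    unfolding y_def by (simp add: cong_iff_dvd_diff)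
  moreover have "\<not> (int p)\<^sup>2 dvd y\<^sup>2 - 1"
    unfolding y_def using prime_square_not_dvd_one_sub_square[OF assms(1)] assms(2) by simp
  ultimately show ?thesis
    using chebT'_cong_one_iff_near_one[OF assms(1,2) _ _ assms(5,6)] assms(7,8)
    unfolding x by (simp add: cong_minus_minus_iff)
next
  case 3
  then show ?thesis
    using chebT'_cong_one_iff_nondegenerate[OF assms(1) _ 3 assms(6-8)] assms(2) by simp
qed

theorem lemma13:
  fixes p n w :: nat and x :: int
  assumes "prime p" and "p > 3" and "n > 1"
    and "gcd n p = 1" and "gcd n (p\<^sup>2 - 1) = 1"
    and "0 \<le> x" and "x \<le> int p - 1" and "w > 0"
  defines "Nx \<equiv> cheb_period p n x"
  defines "lx \<equiv> ord (int p) (chebT' (n ^ Nx) x)"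
  assumes "[chebT (n ^ (Nx * lx)) x = x] (mod (int p) ^ w)"
  shows "[chebT' (n ^ (Nx * lx)) x = 1] (mod (int p) ^ w) \<longleftrightarrow>
         [n ^ (2 * ord p (n\<^sup>2)) = 1] (mod p ^ w)"
proof -
  have p2: "p > 2"
    using assms(2) by simp
  have cn: "coprime n p" and cn2: "coprime n (p\<^sup>2 - 1)"
    unfolding coprime_iff_gcd_eq_1 by (fact assms(4), fact assms(5))
  define m where "m = n ^ (Nx * lx)"
  have K: "\<not> p dvd Nx * lx" and "[chebT' m x = 1] (mod int p)"
    using cheb_period_ord_mod_prime[OF assms(1) p2 cn cn2, of x] unfolding Nx_def lx_def m_def by blast+
  moreover have "odd m"
    unfolding m_def using odd_if_coprime_prime_square_sub_one[OF assms(1) p2 cn2] by simp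
  moreover have "[chebT m x = x] (mod int p ^ w)"
    using assms(11) unfolding m_def .
  ultimately have m2: "[int m ^ 2 = 1] (mod int p)"
    and L: "[chebT' m x = 1] (mod int p ^ w) \<longleftrightarrow> [int m ^ 2 = 1] (mod int p ^ w)"
    using chebT'_cong_one_iff_square_cong_one[OF assms(1,2,6,7) _ assms(8)] by blast+
  have int_cong: "[int m ^ 2 = 1] (mod int q) \<longleftrightarrow> [n ^ (2 * (Nx * lx)) = 1] (mod q)" for q
    using cong_int_iff[of "n ^ (2 * (Nx * lx))" 1 q] unfolding m_def by (simp add: power_mult mult.commute)
  have "[n ^ (2 * (Nx * lx)) = 1] (mod p ^ w) \<longleftrightarrow> [n ^ (2 * ord p (n\<^sup>2)) = 1] (mod p ^ w)"
    using power_ord_square_cong_one_iff[OF assms(1) K] m2 int_cong by blast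
  then show ?thesis
    using L int_cong[of "p ^ w"] unfolding m_def by simp
qed

end
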